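(* For every $\rho\in\mathbb N$ there exist $\mu,n_0\in\mathbb N$ such that for every upwards closed quasi-bush $B=(T,D,\lambda)$ with no coat hangers and with $n\ge n_0$ leaves, if $\mathrm{wcol}_\mu(B)\le n^{1/\mu}$ and for every $w\in V(T)$ either $|\mathrm{IN}(w,B)|\le n^{1/\mu}$ or $|\mathrm{OUT}(w,B)|\le n^{1/\mu}$, then $\mathrm{wcol}_\rho(G(B))\le n^{1/\rho}$.
   Context: A quasi-bush $B=(T,D,\lambda)$: a rooted tree $T$, a set $D$ of pointers from leaves of $T$ to nodes of $T$ (every leaf points to the root), and $\lambda\colon D\to\{0,1\}$. $v\le_T w$ means $v$ is an ancestor of $w$ (including $v=w$); $T(a)$ is the subtree of descendants of $a$. $G(B)$ is the directed graph on the leaves of $T$ where, for distinct leaves $u,v$ and $w$ the lowest ancestor of $v$ with $(u,w)\in D$, $(u,v)$ is an arc iff $\lambda((u,w))=1$; $w$ is the connection point of $(u,v)$. Quasi-bushes are assumed to represent undirected graphs ($G(B)$ symmetric), and $G(B)$ is identified with the corresponding undirected graph. $B$ is upwards closed if $(u,w)\in D$ and $w'\le_T w$ imply $(u,w')\in D$. A coat hanger is a subtree $T(a)$ such that $a$ is neither the root nor a leaf, and some leaf $v$ has a pointer labeled $1$ to the parent of $a$ but no pointer to any node of $T(a)$. $\mathrm{IN}(w,B)$ (resp. $\mathrm{OUT}(w,B)$) is the set of all $u$ (resp. $v$) such that $w$ is the connection point of some arc $(u,v)$ of $G(B)$. $\mathrm{wcol}_r(H)$ is the minimum over linear orders $\prec$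 of the maximum over $v$ of the number of $u$ such that some path of length at most $r$ from $v$ to $u$ has $u$ as its $\prec$-minimum; $\mathrm{wcol}_\mu(B)$ refers to the Gaifman graph of $B$ (vertex set $V(T)$, edges the tree edges and pointers). *)

theory Defs
  imports Complex_Main
begin

definition rooted_tree :: "'a set \<Rightarrow> 'a \<Rightarrow> ('a \<Rightarrow> 'a) \<Rightarrow> bool" where
  "rooted_tree V r par \<longleftrightarrow> finite V \<and> r \<in> V \<and> par r = r \<and> (\<forall>v\<in>V. par v \<in> V)
     \<and> (\<forall>v\<in>V. \<exists>k. (par ^^ k) v = r)"

definition anc :: "'a set \<Rightarrow> ('a \<Rightarrow> 'a) \<Rightarrow> 'a \<Rightarrow> 'a \<Rightarrow> bool" where
  "anc V par v w \<longleftrightarrow> w \<in> V \<and> (\<exists>k. (par ^^ k) w = v)"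

definition is_leaf :: "'a set \<Rightarrow> ('a \<Rightarrow> 'a) \<Rightarrow> 'a \<Rightarrow> bool" where
  "is_leaf V par v \<longleftrightarrow> v \<in> V \<and> \<not> (\<exists>u\<in>V. u \<noteq> v \<and> par u = v)"

definition leaves :: "'a set \<Rightarrow> ('a \<Rightarrow> 'a) \<Rightarrow> 'a set" where
  "leaves V par = {v. is_leaf V par v}"

(* Quasi-bush (T, D, lambda); lambda((u,w)) = 1 is encoded as lam (u,w) = True *)
definition quasi_bush :: "'a set \<Rightarrow> 'a \<Rightarrow> ('a \<Rightarrow> 'a) \<Rightarrow> ('a \<times> 'a) set \<Rightarrow> bool" where
  "quasi_bush V r par D \<longleftrightarrow> rooted_tree V r par
     \<and> D \<subseteq> leaves V par \<times> V
     \<and> (\<forall>u\<in>leaves V par. (u, r) \<in> D)"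

definition conn_point :: "'a set \<Rightarrow> ('a \<Rightarrow> 'a) \<Rightarrow> ('a \<times> 'a) set \<Rightarrow> 'a \<Rightarrow> 'a \<Rightarrow> 'a" where
  "conn_point V par D u v = (THE w. anc V par w v \<and> (u, w) \<in> D
      \<and> (\<forall>w'. anc V par w' v \<and> (u, w') \<in> D \<longrightarrow> anc V par w' w))"

definition arc :: "'a set \<Rightarrow> ('a \<Rightarrow> 'a) \<Rightarrow> ('a \<times> 'a) set \<Rightarrow> ('a \<times> 'a \<Rightarrow> bool) \<Rightarrow> 'a \<Rightarrow> 'a \<Rightarrow> bool" where
  "arc V par D lam u v \<longleftrightarrow> u \<in> leaves V par \<and> v \<in> leaves V par \<and> u \<noteq> v
      \<and> lam (u, conn_point V par D u v)"

definition upwards_closed :: "'a set \<Rightarrow> ('a \<Rightarrow> 'a) \<Rightarrow> ('a \<times> 'a) set \<Rightarrow> bool" where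
  "upwards_closed V par D \<longleftrightarrow> (\<forall>u w w'. (u, w) \<in> D \<and> anc V par w' w \<longrightarrow> (u, w') \<in> D)"

definition coat_hanger :: "'a set \<Rightarrow> 'a \<Rightarrow> ('a \<Rightarrow> 'a) \<Rightarrow> ('a \<times> 'a) set \<Rightarrow> ('a \<times> 'a \<Rightarrow> bool) \<Rightarrow> 'a \<Rightarrow> bool" where
  "coat_hanger V r par D lam a \<longleftrightarrow> a \<in> V \<and> a \<noteq> r \<and> \<not> is_leaf V par a
     \<and> (\<exists>v. is_leaf V par v \<and> (v, par a) \<in> D \<and> lam (v, par a)
            \<and> (\<forall>x. anc V par a x \<longrightarrow> (v, x) \<notin> D))"

definition IN_set :: "'a set \<Rightarrow> ('a \<Rightarrow> 'a) \<Rightarrow> ('a \<times> 'a) set \<Rightarrow> ('a \<times> 'a \<Rightarrow> bool) \<Rightarrow> 'a \<Rightarrow> 'a set" where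
  "IN_set V par D lam w = {u. \<exists>v. arc V par D lam u v \<and> conn_point V par D u v = w}"

definition OUT_set :: "'a set \<Rightarrow> ('a \<Rightarrow> 'a) \<Rightarrow> ('a \<times> 'a) set \<Rightarrow> ('a \<times> 'a \<Rightarrow> bool) \<Rightarrow> 'a \<Rightarrow> 'a set" where
  "OUT_set V par D lam w = {v. \<exists>u. arc V par D lam u v \<and> conn_point V par D u v = w}"

(* Weak reachability: u is weakly r-reachable from v w.r.t. the linear order given by
   the injective ranking f, if some walk of length \<le> r (at most r edges) from v to u
   has u as its f-minimum. *)
definition wreach :: "nat \<Rightarrow> 'a set \<Rightarrow> ('a \<Rightarrow> 'a \<Rightarrow> bool) \<Rightarrow> ('a \<Rightarrow> nat) \<Rightarrow> 'a \<Rightarrow> 'a set" where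
  "wreach r V E f v = {u \<in> V. \<exists>p. p \<noteq> [] \<and> hd p = v \<and> last p = u \<and> length p \<le> r + 1
      \<and> set p \<subseteq> V \<and> (\<forall>i. i + 1 < length p \<longrightarrow> E (p ! i) (p ! (i + 1)))
      \<and> (\<forall>x\<in>set p. f u \<le> f x)}"

definition wcol :: "nat \<Rightarrow> 'a set \<Rightarrow> ('a \<Rightarrow> 'a \<Rightarrow> bool) \<Rightarrow> nat" where
  "wcol r V E = (LEAST k. \<exists>f :: 'a \<Rightarrow> nat. inj_on f V \<and> (\<forall>v\<in>V. card (wreach r V E f v) \<le> k))"

definition gaifman_edge :: "'a \<Rightarrow> ('a \<Rightarrow> 'a) \<Rightarrow> ('a \<times> 'a) set \<Rightarrow> 'a \<Rightarrow> 'a \<Rightarrow> bool" where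
  "gaifman_edge r par D x y \<longleftrightarrow> (x \<noteq> r \<and> y = par x) \<or> (y \<noteq> r \<and> x = par y)
      \<or> (x, y) \<in> D \<or> (y, x) \<in> D"

end

theory Submission
  imports Defs
begin

(* Fix a ranking f of V(T) realising wcol_{4 rho} of the Gaifman graph, and let S(w) be the
   smaller of IN(w,B) and OUT(w,B). Without coat hangers, and by upward closure, the connection
   point w of an arc (u,v) is v or the parent of v, so every arc becomes a Gaifman walk u, w, v
   with u or v in S(w). Rank each leaf x by the lowest f-rank of its "hubs": x itself and the
   nodes w with x in S(w). A walk of at most rho arcs whose minimum is its end u then expands
   into a Gaifman walk of length at most 2 rho + 1 that ends in the lowest hub w of u and has w
   as its f-minimum. So u is w or lies in S(w) for some w weakly 4 rho-reachable in the Gaifman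
   graph, whence wcol_rho(G(B)) <= wcol_{4 rho}(B) (n^{1/(4 rho)} + 1) <= n^{1/rho}. *)

lemma funpow_par_in_tree: "rooted_tree V r par \<Longrightarrow> v \<in> V \<Longrightarrow> (par ^^ k) v \<in> V"
  by (induction k) (auto simp: rooted_tree_def)

lemma funpow_par_root: "rooted_tree V r par \<Longrightarrow> (par ^^ k) r = r"
  by (induction k) (auto simp: rooted_tree_def)

lemma anc_in_tree: "rooted_tree V r par \<Longrightarrow> anc V par w v \<Longrightarrow> w \<in> V"
  by (auto simp: anc_def funpow_par_in_tree)

lemma rooted_tree_cycle_root:
  assumes T: "rooted_tree V r par" and x: "x \<in> V" and cycle: "(par ^^ n) x = x" and "n > 0"
  shows "x = r"
proof -
  obtain t where t: "(par ^^ t) x = r" using T x by (auto simp: rooted_tree_def)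
  have "((par ^^ n) ^^ t) x = x" using cycle by (induction t) auto
  then have "(par ^^ (n * t - t)) ((par ^^ t) x) = x"
    using \<open>n > 0\<close> by (simp add: funpow_mult flip: funpow_add[unfolded comp_def, THEN fun_cong])
  then show ?thesis using t funpow_par_root[OF T] by simp
qed

lemma anc_antisym:
  assumes T: "rooted_tree V r par" and "anc V par a b" and "anc V par b a"
  shows "a = b"
proof -
  obtain i j where i: "(par ^^ i) b = a" and j: "(par ^^ j) a = b" and "b \<in> V"
    using assms by (auto simp: anc_def)
  show ?thesis
  proof (cases "i = 0")
    case False
    have "(par ^^ (j + i)) b = b" using i j by (simp add: funpow_add)
    then have "b = r" using rooted_tree_cycle_root[OF T \<open>b \<in> V\<close>] False by simp
    then show ?thesis using i funpow_par_root[OF T] by simp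
  qed (use i in simp)
qed

lemma conn_point_spec:
  assumes QB: "quasi_bush V r par D" and u: "u \<in> leaves V par" and v: "v \<in> V"
  defines "w \<equiv> conn_point V par D u v"
  shows "anc V par w v" and "(u, w) \<in> D"
    and "\<And>w'. anc V par w' v \<Longrightarrow> (u, w') \<in> D \<Longrightarrow> anc V par w' w"
proof -
  have T: "rooted_tree V r par" and ur: "(u, r) \<in> D" using QB u by (auto simp: quasi_bush_def)
  obtain t where "(par ^^ t) v = r" using T v by (auto simp: rooted_tree_def)
  define k where "k = (LEAST k. (u, (par ^^ k) v) \<in> D)"
  define w0 where "w0 = (par ^^ k) v"
  have w0D: "(u, w0) \<in> D"
    unfolding w0_def k_def by (rule LeastI[of _ t]) (use \<open>(par ^^ t) v = r\<close> ur in simp)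
  have w0V: "w0 \<in> V" unfolding w0_def using funpow_par_in_tree[OF T v] .
  let ?lowest = "\<lambda>w. anc V par w v \<and> (u, w) \<in> D \<and> (\<forall>w'. anc V par w' v \<and> (u, w') \<in> D \<longrightarrow> anc V par w' w)"
  have "?lowest w0"
  proof (intro conjI allI impI)
    show "anc V par w0 v" using v by (auto simp: anc_def w0_def)
    fix w' assume "anc V par w' v \<and> (u, w') \<in> D"
    then obtain j where j: "(par ^^ j) v = w'" "(u, w') \<in> D" by (auto simp: anc_def)
    then have "k \<le> j" unfolding k_def by (auto intro: Least_le)
    then have "(par ^^ (j - k)) w0 = w'"
      using j unfolding w0_def by (metis comp_apply funpow_add le_add_diff_inverse2)
    then show "anc V par w' w0" using w0V by (auto simp: anc_def)
  qed (fact w0D)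
  moreover have "w = w0"
    unfolding w_def conn_point_def
    by (rule the_equality) (use \<open>?lowest w0\<close> anc_antisym[OF T] in blast)+
  ultimately show "anc V par w v" "(u, w) \<in> D"
    "\<And>w'. anc V par w' v \<Longrightarrow> (u, w') \<in> D \<Longrightarrow> anc V par w' w" by blast+
qed

text \<open>A connection point two or more levels above the head v would make its child a on the
  path to v a coat hanger, unless the tail points into the subtree of a; by upward closure it then
  points to a itself, so a, not its parent, is the connection point.\<close>

lemma conn_point_of_arc:
  assumes QB: "quasi_bush V r par D" and UC: "upwards_closed V par D"
    and NC: "\<not> (\<exists>a. coat_hanger V r par D lam a)" and uv: "arc V par D lam u v"
  shows "conn_point V par D u v = v \<or> (v \<noteq> r \<and> conn_point V par D u v = par v)"
proof -
  define w where "w = conn_point V par D u v"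
  have T: "rooted_tree V r par" using QB by (simp add: quasi_bush_def)
  have u: "u \<in> leaves V par" and v: "v \<in> V" and lam: "lam (u, w)"
    using uv by (auto simp: arc_def w_def leaves_def is_leaf_def)
  note cp = conn_point_spec[OF QB u v, folded w_def]
  obtain k0 where "(par ^^ k0) v = w" using cp(1) by (auto simp: anc_def)
  define k where "k = (LEAST k. (par ^^ k) v = w)"
  have k: "(par ^^ k) v = w" unfolding k_def by (rule LeastI) fact
  have k_min: "\<And>j. (par ^^ j) v = w \<Longrightarrow> k \<le> j" unfolding k_def by (rule Least_le)
  consider "k = 0" | "k = 1" | m where "k = Suc (Suc m)"
    by (metis One_nat_def not0_implies_Suc)
  then show ?thesis
  proof cases
    case 1
    then show ?thesis using k w_def by simp
  next
    case 2
    have "v \<noteq> r"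
    proof
      assume "v = r"
      then have "(par ^^ 0) v = w" using k 2 T by (simp add: rooted_tree_def)
      then show False using k_min 2 by fastforce
    qed
    then show ?thesis using k 2 w_def by simp
  next
    case (3 m)
    define a where "a = (par ^^ Suc m) v"
    define c where "c = (par ^^ m) v"
    have a_w: "par a = w" and c_a: "par c = a" using k 3 by (simp_all add: a_def c_def)
    have "a \<noteq> w" using k_min[of "Suc m"] 3 by (auto simp: a_def)
    have a: "a \<in> V" "a \<noteq> r" "\<not> is_leaf V par a"
    proof -
      show "a \<in> V" unfolding a_def using funpow_par_in_tree[OF T v] .
      show "a \<noteq> r" using T a_w \<open>a \<noteq> w\<close> by (auto simp: rooted_tree_def)
      have "c \<in> V" "c \<noteq> a" using funpow_par_in_tree[OF T v] a_w c_a \<open>a \<noteq> w\<close> by (auto simp: c_def)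
      then show "\<not> is_leaf V par a" using c_a by (auto simp: is_leaf_def)
    qed
    have "is_leaf V par u" using u by (simp add: leaves_def)
    then obtain x where "anc V par a x" "(u, x) \<in> D"
      using NC a cp(2) lam a_w by (auto simp: coat_hanger_def)
    then have "(u, a) \<in> D" using UC by (auto simp: upwards_closed_def)
    moreover have "anc V par a v" using v unfolding anc_def a_def by (intro conjI exI[of _ "Suc m"]) simp_all
    ultimately have "anc V par a w" using cp(3) by blast
    moreover have "anc V par w a" using a_w \<open>a \<in> V\<close> by (auto simp: anc_def intro: exI[of _ 1])
    ultimately show ?thesis using anc_antisym[OF T] \<open>a \<noteq> w\<close> by blast
  qed
qed

lemma gaifman_edge_sym: "gaifman_edge r par D x y \<Longrightarrow> gaifman_edge r par D y x"
  by (auto simp: gaifman_edge_def)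

lemma leaves_subset: "leaves V par \<subseteq> V"
  by (auto simp: leaves_def is_leaf_def)

lemma conn_point_in_tree:
  assumes "quasi_bush V r par D" and "u \<in> leaves V par" and "v \<in> V"
  shows "conn_point V par D u v \<in> V"
  using anc_in_tree conn_point_spec(1)[OF assms] assms(1) by (auto simp: quasi_bush_def)

lemma IN_set_gaifman_edge:
  assumes QB: "quasi_bush V r par D" and "u \<in> IN_set V par D lam w"
  shows "gaifman_edge r par D u w"
proof -
  obtain v where "arc V par D lam u v" and w: "conn_point V par D u v = w"
    using assms(2) by (auto simp: IN_set_def)
  then have "u \<in> leaves V par" "v \<in> V" using leaves_subset[of V par] unfolding arc_def by blast+
  then have "(u, w) \<in> D" using conn_point_spec(2)[OF QB] w by blast
  then show ?thesis by (simp add: gaifman_edge_def)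
qed

lemma OUT_set_gaifman_edge:
  assumes QB: "quasi_bush V r par D" and UC: "upwards_closed V par D"
    and NC: "\<not> (\<exists>a. coat_hanger V r par D lam a)"
    and "v \<in> OUT_set V par D lam w" and "v \<noteq> w"
  shows "gaifman_edge r par D v w"
proof -
  obtain u where uv: "arc V par D lam u v" and w: "conn_point V par D u v = w"
    using assms(4) by (auto simp: OUT_set_def)
  then have "v \<noteq> r \<and> w = par v" using conn_point_of_arc[OF QB UC NC uv] \<open>v \<noteq> w\<close> by auto
  then show ?thesis by (simp add: gaifman_edge_def)
qed

lemma in_wreach_iff:
  "u \<in> wreach r V E f v \<longleftrightarrow> (\<exists>p. p \<noteq> [] \<and> hd p = v \<and> last p = u \<and> length p \<le> r + 1
     \<and> set p \<subseteq> V \<and> successively E p \<and> (\<forall>x\<in>set p. f u \<le> f x))"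
  by (auto simp: wreach_def successively_conv_nth)

lemma wcol_le:
  assumes "inj_on f V" and "\<And>v. v \<in> V \<Longrightarrow> card (wreach r V E f v) \<le> k"
  shows "wcol r V E \<le> k"
  unfolding wcol_def by (rule Least_le) (use assms in blast)

lemma wcol_attained:
  assumes "finite V"
  obtains f :: "'a \<Rightarrow> nat" where "inj_on f V" and "\<And>v. v \<in> V \<Longrightarrow> card (wreach r V E f v) \<le> wcol r V E"
proof -
  obtain f :: "'a \<Rightarrow> nat" where "inj_on f V" using finite_imp_inj_to_nat_seg[OF assms] by blast
  moreover have "card (wreach r V E f v) \<le> card V" for v
    using assms by (intro card_mono) (auto simp: wreach_def)
  ultimately have bound: "\<exists>f :: 'a \<Rightarrow> nat. inj_on f V \<and> (\<forall>v\<in>V. card (wreach r V E f v) \<le> card V)"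
    by blast
  have "\<exists>f :: 'a \<Rightarrow> nat. inj_on f V \<and> (\<forall>v\<in>V. card (wreach r V E f v) \<le> wcol r V E)"
    unfolding wcol_def by (rule LeastI_ex) (use bound in blast)
  then show ?thesis using that by blast
qed

lemma inj_ranking_refining:
  fixes f g :: "'a \<Rightarrow> nat"
  assumes "finite V" and "inj_on f V"
  obtains h :: "'a \<Rightarrow> nat"
  where "inj_on h V" and "\<And>a b. a \<in> V \<Longrightarrow> b \<in> V \<Longrightarrow> h a \<le> h b \<Longrightarrow> g a \<le> g b"
proof
  define M where "M = Max (f ` V)"
  have f_le: "f x \<le> M" if "x \<in> V" for x unfolding M_def using assms(1) that by simp
  define h where "h x = g x * (M + 1) + f x" for x
  have "h x mod (M + 1) = f x" if "x \<in> V" for x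
    using f_le[OF that] by (simp only: h_def mod_mult_self3) simp
  then show "inj_on h V" using assms(2) by (metis inj_on_def)
  show "g a \<le> g b" if "a \<in> V" "b \<in> V" "h a \<le> h b" for a b
  proof (rule ccontr)
    assume "\<not> g a \<le> g b"
    then have "(g b + 1) * (M + 1) \<le> g a * (M + 1)" by (intro mult_right_mono) auto
    then show False using that f_le[of b] by (simp add: h_def algebra_simps)
  qed
qed

lemma successively_subdivide:
  assumes "successively R q" and "q \<noteq> []" and "\<forall>x\<in>set q. P x"
    and "\<And>x y. x \<in> set q \<Longrightarrow> y \<in> set q \<Longrightarrow> R x y \<Longrightarrow> \<exists>w. E x w \<and> (w = y \<or> E w y) \<and> P w"
  shows "\<exists>p. p \<noteq> [] \<and> hd p = hd q \<and> last p = last q \<and> length p < 2 * length q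
     \<and> successively E p \<and> (\<forall>z\<in>set p. P z)"
  using assms
proof (induction q rule: induct_list012)
  case (2 x)
  then show ?case by (intro exI[of _ "[x]"]) auto
next
  case (3 x y rest)
  then obtain p where p: "p \<noteq> []" "hd p = y" "last p = last (y # rest)"
    "length p < 2 * length (y # rest)" "successively E p" "\<forall>z\<in>set p. P z"
    by auto
  have "R x y" using "3.prems"(1) by simp
  then obtain w where w: "E x w" "w = y \<or> E w y" "P w" using "3.prems"(4)[of x y] by auto
  have "successively E (x # p)" if "w = y" using p w that by (cases p) auto
  moreover have "successively E (x # w # p)" if "w \<noteq> y" using p w that by (cases p) auto
  ultimately show ?case using p w "3.prems"(3)
    by (cases "w = y"; intro exI[of _ "if w = y then x # p else x # w # p"]) auto
qed simp

definition hubs :: "'a set \<Rightarrow> ('a \<Rightarrow> 'a set) \<Rightarrow> 'a \<Rightarrow> 'a set" where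
  "hubs V S x = insert x {w \<in> V. x \<in> S w}"

context
  fixes V L :: "'a set" and A H :: "'a \<Rightarrow> 'a \<Rightarrow> bool" and S :: "'a \<Rightarrow> 'a set"
  assumes finite_V: "finite V" and L_subset: "L \<subseteq> V" and S_subset: "\<And>w. S w \<subseteq> V"
    and arc_via_hub: "\<And>x y. x \<in> L \<Longrightarrow> y \<in> L \<Longrightarrow> A x y
       \<Longrightarrow> \<exists>w\<in>V. H x w \<and> (w = y \<or> H w y) \<and> (x \<in> S w \<or> y \<in> S w)"
    and edge_to_hub: "\<And>w x. w \<in> V \<Longrightarrow> x \<in> S w \<Longrightarrow> x \<noteq> w \<Longrightarrow> H x w"
begin

lemma wreach_subset_hubs:
  fixes f g :: "'a \<Rightarrow> nat"
  assumes radius: "2 * \<rho> + 1 \<le> \<mu>"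
    and refines: "\<And>a b. a \<in> V \<Longrightarrow> b \<in> V \<Longrightarrow> g a \<le> g b
       \<Longrightarrow> Min (f ` hubs V S a) \<le> Min (f ` hubs V S b)"
  shows "wreach \<rho> L A g v \<subseteq> (\<Union>w\<in>wreach \<mu> V H f v. insert w (S w))"
proof
  define rank where "rank x = Min (f ` hubs V S x)" for x
  have finite_hubs: "finite (hubs V S x)" for x using finite_V by (simp add: hubs_def)
  have rank_le: "rank x \<le> f w" if "w \<in> hubs V S x" for x w
    using finite_hubs that by (simp add: rank_def)
  fix u assume "u \<in> wreach \<rho> L A g v"
  then obtain q where q: "q \<noteq> []" "hd q = v" "last q = u" "length q \<le> \<rho> + 1"
    "set q \<subseteq> L" "successively A q" and q_min: "\<forall>x\<in>set q. g u \<le> g x"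
    unfolding in_wreach_iff by blast
  have u: "u \<in> L" using q by auto
  define high where "high z \<longleftrightarrow> z \<in> V \<and> rank u \<le> f z" for z
  have high_q: "\<forall>x\<in>set q. high x"
  proof
    fix x assume x: "x \<in> set q"
    have "rank u \<le> rank x" using refines q_min q(5) u x L_subset unfolding rank_def by blast
    then show "high x" using rank_le[of x x] x q(5) L_subset by (auto simp: high_def hubs_def)
  qed
  have high_hub: "\<exists>w. H x w \<and> (w = y \<or> H w y) \<and> high w"
    if xy: "x \<in> set q" "y \<in> set q" "A x y" for x y
  proof -
    obtain w where w: "w \<in> V" "H x w" "w = y \<or> H w y" "x \<in> S w \<or> y \<in> S w"
      using arc_via_hub xy q(5) by blast
    then have "rank x \<le> f w \<or> rank y \<le> f w" using rank_le by (auto simp: hubs_def)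
    moreover have "rank u \<le> rank x" "rank u \<le> rank y"
      using refines q_min q(5) u xy L_subset unfolding rank_def by blast+
    ultimately show ?thesis using w by (auto simp: high_def)
  qed
  obtain p where p: "p \<noteq> []" "hd p = v" "last p = u" "length p < 2 * length q"
    "successively H p" "\<forall>z\<in>set p. high z"
    using successively_subdivide[OF q(6,1) high_q high_hub] q(2,3) by auto
  have "rank u \<in> f ` hubs V S u"
    unfolding rank_def using finite_hubs by (intro Min_in) (auto simp: hubs_def)
  then obtain w where w: "w \<in> hubs V S u" "f w = rank u" by auto
  have "w \<in> V" using w(1) u L_subset by (auto simp: hubs_def)
  have u_w: "w = u \<or> H u w" using w(1) edge_to_hub by (auto simp: hubs_def)
  define p' where "p' = (if w = u then p else p @ [w])"
  have "p' \<noteq> []" "hd p' = v" "last p' = w"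
    using p by (auto simp: p'_def)
  moreover have "length p' \<le> \<mu> + 1" using p(4) q(4) radius by (simp add: p'_def)
  moreover have "successively H p'" using p(1,3,5) u_w by (auto simp: p'_def successively_append_iff)
  moreover have "set p' \<subseteq> V" "\<forall>z\<in>set p'. f w \<le> f z"
    using p(6) \<open>w \<in> V\<close> w(2) by (auto simp: p'_def high_def)
  ultimately have "w \<in> wreach \<mu> V H f v" unfolding in_wreach_iff by blast
  moreover have "u \<in> insert w (S w)" using w(1) by (auto simp: hubs_def)
  ultimately show "u \<in> (\<Union>w\<in>wreach \<mu> V H f v. insert w (S w))" by blast
qed

lemma wcol_le_hub_bound:
  assumes radius: "2 * \<rho> + 1 \<le> \<mu>" and S_card: "\<And>w. w \<in> V \<Longrightarrow> card (S w) \<le> k"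
  shows "wcol \<rho> L A \<le> wcol \<mu> V H * (k + 1)"
proof -
  obtain f :: "'a \<Rightarrow> nat" where f_inj: "inj_on f V"
    and f_wreach: "\<And>v. v \<in> V \<Longrightarrow> card (wreach \<mu> V H f v) \<le> wcol \<mu> V H"
    using wcol_attained[OF finite_V] by blast
  obtain g :: "'a \<Rightarrow> nat" where "inj_on g V"
    and refines: "\<And>a b. a \<in> V \<Longrightarrow> b \<in> V \<Longrightarrow> g a \<le> g b \<Longrightarrow> Min (f ` hubs V S a) \<le> Min (f ` hubs V S b)"
    using inj_ranking_refining[OF finite_V f_inj, where g = "\<lambda>x. Min (f ` hubs V S x)"] by blast
  show ?thesis
  proof (rule wcol_le)
    show "inj_on g L" using \<open>inj_on g V\<close> L_subset by (rule inj_on_subset)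
    fix v assume "v \<in> L"
    define W where "W = wreach \<mu> V H f v"
    have "W \<subseteq> V" by (auto simp: W_def wreach_def)
    then have "finite W" using finite_V by (rule finite_subset)
    have "finite (S w)" for w using S_subset finite_V by (rule finite_subset)
    then have "card (wreach \<rho> L A g v) \<le> card (\<Union>w\<in>W. insert w (S w))"
      using wreach_subset_hubs[OF radius refines] \<open>finite W\<close>
      unfolding W_def by (intro card_mono) auto
    also have "\<dots> \<le> (\<Sum>w\<in>W. card (insert w (S w)))" using \<open>finite W\<close> by (rule card_UN_le)
    also have "\<dots> \<le> (\<Sum>w\<in>W. k + 1)"
      using S_card \<open>W \<subseteq> V\<close> by (intro sum_mono card_insert_le_m1) auto
    also have "\<dots> = card W * (k + 1)" by simp
    also have "\<dots> \<le> wcol \<mu> V H * (k + 1)"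
      using f_wreach[of v] \<open>v \<in> L\<close> L_subset unfolding W_def by (intro mult_right_mono) blast+
    finally show "card (wreach \<rho> L A g v) \<le> wcol \<mu> V H * (k + 1)" .
  qed
qed

end

lemma wcol_arc_le_wcol_gaifman:
  assumes QB: "quasi_bush V r par D" and UC: "upwards_closed V par D"
    and NC: "\<not> (\<exists>a. coat_hanger V r par D lam a)" and radius: "2 * \<rho> + 1 \<le> \<mu>"
    and small_side: "\<And>w. w \<in> V
       \<Longrightarrow> card (IN_set V par D lam w) \<le> k \<or> card (OUT_set V par D lam w) \<le> k"
  shows "wcol \<rho> (leaves V par) (arc V par D lam) \<le> wcol \<mu> V (gaifman_edge r par D) * (k + 1)"
proof -
  let ?H = "gaifman_edge r par D"
  define S where "S w = (if card (IN_set V par D lam w) \<le> k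
    then IN_set V par D lam w else OUT_set V par D lam w)" for w
  have IN_OUT_leaves: "IN_set V par D lam w \<union> OUT_set V par D lam w \<subseteq> leaves V par" for w
    by (auto simp: IN_set_def OUT_set_def arc_def)
  show ?thesis
  proof (rule wcol_le_hub_bound[where S = S])
    show "finite V" using QB by (simp add: quasi_bush_def rooted_tree_def)
    show "leaves V par \<subseteq> V" by (rule leaves_subset)
    show "S w \<subseteq> V" for w using IN_OUT_leaves[of w] leaves_subset[of V par] by (auto simp: S_def)
    show "\<exists>w\<in>V. ?H x w \<and> (w = y \<or> ?H w y) \<and> (x \<in> S w \<or> y \<in> S w)"
      if "x \<in> leaves V par" "y \<in> leaves V par" and xy: "arc V par D lam x y" for x y
    proof -
      define w where "w = conn_point V par D x y"
      have "w \<in> V"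
        unfolding w_def using conn_point_in_tree[OF QB that(1) subsetD[OF leaves_subset that(2)]] .
      have x_in: "x \<in> IN_set V par D lam w" and y_out: "y \<in> OUT_set V par D lam w"
        using xy unfolding IN_set_def OUT_set_def w_def by blast+
      have "?H x w" using IN_set_gaifman_edge[OF QB x_in] .
      moreover have "w = y \<or> ?H w y"
        using OUT_set_gaifman_edge[OF QB UC NC y_out] gaifman_edge_sym[of r par D y w] by blast
      moreover have "x \<in> S w \<or> y \<in> S w" using x_in y_out by (simp add: S_def)
      ultimately show ?thesis using \<open>w \<in> V\<close> by blast
    qed
    show "?H x w" if "w \<in> V" "x \<in> S w" "x \<noteq> w" for w x
    proof -
      have "x \<in> IN_set V par D lam w \<or> x \<in> OUT_set V par D lam w"
        using \<open>x \<in> S w\<close> by (simp add: S_def split: if_splits)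
      then show ?thesis
        using IN_set_gaifman_edge[OF QB] OUT_set_gaifman_edge[OF QB UC NC] \<open>x \<noteq> w\<close> by blast
    qed
    show "card (S w) \<le> k" if "w \<in> V" for w using small_side[OF that] by (auto simp: S_def)
  qed (rule radius)
qed

lemma mult_succ_le_powr:
  fixes \<rho> n c k :: nat
  assumes "\<rho> \<ge> 1" and "4 ^ \<rho> \<le> n"
    and "real c \<le> real n powr (1 / real (4 * \<rho>))" and "real k \<le> real n powr (1 / real (4 * \<rho>))"
  shows "real (c * (k + 1)) \<le> real n powr (1 / real \<rho>)"
proof -
  define s where "s = real n powr (1 / real (4 * \<rho>))"
  have "n > 0" using assms(2) by (metis le_zero_eq not_gr0 power_not_zero zero_neq_numeral)
  then have s_pow: "s ^ m = real n powr (real m / real (4 * \<rho>))" for m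
    by (simp add: s_def powr_power)
  have "s \<ge> 1" unfolding s_def using \<open>n > 0\<close> by (simp add: ge_one_powr_ge_zero)
  have "(2 :: real) ^ (2 * \<rho>) = real (4 ^ \<rho>)" by (simp add: power_mult)
  also have "\<dots> \<le> s ^ (4 * \<rho>)" using s_pow[of "4 * \<rho>"] assms(1,2) \<open>n > 0\<close> by simp
  also have "\<dots> = (s ^ 2) ^ (2 * \<rho>)" by (simp add: power_mult[symmetric])
  finally have "2 \<le> s ^ 2" using power_mono_iff[of 2 "s ^ 2" "2 * \<rho>"] assms(1) \<open>s \<ge> 1\<close> by simp
  have "s \<le> s ^ 2" using mult_left_mono[of 1 s s] \<open>s \<ge> 1\<close> by (simp add: power2_eq_square)
  have "real (c * (k + 1)) = real c * (real k + 1)" by (simp add: algebra_simps)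
  also have "\<dots> \<le> s * (s + 1)" using assms(3,4) \<open>s \<ge> 1\<close> unfolding s_def by (intro mult_mono) auto
  also have "\<dots> = s ^ 2 + s" by (simp add: power2_eq_square algebra_simps)
  also have "\<dots> \<le> 2 * s ^ 2" using \<open>s \<le> s ^ 2\<close> by simp
  also have "\<dots> \<le> s ^ 2 * s ^ 2" using \<open>2 \<le> s ^ 2\<close> by (intro mult_right_mono) auto
  also have "\<dots> = s ^ 4" by (simp flip: power_add)
  also have "\<dots> = real n powr (1 / real \<rho>)" by (simp add: s_pow)
  finally show ?thesis .
qed

theorem lemma7p36:
  fixes \<rho> :: nat
  assumes "\<rho> \<ge> 1"
  shows "\<exists>\<mu> n\<^sub>0 :: nat. \<mu> \<ge> 1 \<and>
    (\<forall>(V :: nat set) r par D lam.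
       quasi_bush V r par D
       \<longrightarrow> (\<forall>u v. arc V par D lam u v \<longleftrightarrow> arc V par D lam v u)
       \<longrightarrow> upwards_closed V par D
       \<longrightarrow> \<not> (\<exists>a. coat_hanger V r par D lam a)
       \<longrightarrow> card (leaves V par) \<ge> n\<^sub>0
       \<longrightarrow> real (wcol \<mu> V (gaifman_edge r par D))
             \<le> real (card (leaves V par)) powr (1 / real \<mu>)
       \<longrightarrow> (\<forall>w\<in>V. real (card (IN_set V par D lam w)) \<le> real (card (leaves V par)) powr (1 / real \<mu>)
                 \<or> real (card (OUT_set V par D lam w)) \<le> real (card (leaves V par)) powr (1 / real \<mu>))
       \<longrightarrow> real (wcol \<rho> (leaves V par) (arc V par D lam))
             \<le> real (card (leaves V par)) powr (1 / real \<rho>))"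
proof (rule exI[of _ "4 * \<rho>"], rule exI[of _ "4 ^ \<rho>"], intro conjI allI impI)
  show "1 \<le> 4 * \<rho>" using assms by simp
  fix V :: "nat set" and r par D lam
  assume QB: "quasi_bush V r par D" and "\<forall>u v. arc V par D lam u v \<longleftrightarrow> arc V par D lam v u"
    and UC: "upwards_closed V par D" and NC: "\<not> (\<exists>a. coat_hanger V r par D lam a)"
    and large: "4 ^ \<rho> \<le> card (leaves V par)"
    and wcol_small: "real (wcol (4 * \<rho>) V (gaifman_edge r par D))
      \<le> real (card (leaves V par)) powr (1 / real (4 * \<rho>))"
    and small_side: "\<forall>w\<in>V. real (card (IN_set V par D lam w)) \<le> real (card (leaves V par)) powr (1 / real (4 * \<rho>))
      \<or> real (card (OUT_set V par D lam w)) \<le> real (card (leaves V par)) powr (1 / real (4 * \<rho>))"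
  define s where "s = real (card (leaves V par)) powr (1 / real (4 * \<rho>))"
  have "wcol \<rho> (leaves V par) (arc V par D lam)
      \<le> wcol (4 * \<rho>) V (gaifman_edge r par D) * (nat \<lfloor>s\<rfloor> + 1)"
    using assms small_side le_nat_floor unfolding s_def
    by (intro wcol_arc_le_wcol_gaifman[OF QB UC NC]) auto
  moreover have "real (nat \<lfloor>s\<rfloor>) \<le> s" by (simp add: s_def)
  ultimately show "real (wcol \<rho> (leaves V par) (arc V par D lam))
      \<le> real (card (leaves V par)) powr (1 / real \<rho>)"
    using mult_succ_le_powr[OF assms large wcol_small] unfolding s_def
    by (meson of_nat_le_iff order_trans)
qed

end
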